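(* In the setting below, for every $m\in\mathbb N$ with $1\le m\le nN$, $$\mathbb P(X_m\ge1)\ge\min\Big\{\frac{m}{2N},\frac{1}{2C_G}\Big\}\,\mathbb P(X_{\ell N}\ge1),$$ and for all $k,m\in\mathbb N$ with $2kN\le m\le nN$, $$\mathbb P(X_m\ge k)\ge\frac{\mathbb P(X_{\ell N}\ge k)}{2+4C_G}.$$
   Context: Let $n,N\in\mathbb N$, $I=\{1,\dots,n\}$, $J=\{1,\dots,N\}$, $G$ a nonempty finite set of maps $I\to J$, $\mathbb P$ the normalized counting measure on $G$ ($\mathbb P(E)=|E|/|G|$) and $\mathbb E$ its expectation. Assume there is a constant $C_G\ge1$ such that for all $i\in I,j\in J$, $\mathbb P(g(i)=j)=1/N$, and for all pairs $(i_1,j_1)\ne(i_2,j_2)$ in $I\times J$, $\mathbb P(g(i_1)=j_1,g(i_2)=j_2)\le C_G/N^2$. Fix an integer $1\le\ell\le n$ and a matrix $a\in\mathbb R^{n\times N}$ with non-negative entries, and let $h:\{1,\dots,nN\}\to I\times J$ be a bijection with $a(h(j))\ge a(h(j+1))$ for $1\le j<\ell N$ and $a(h(j))=0$ for $\ell N<j\le nN$ (here $a(i,j)=a_{ij}$). Identify each $g\in G$ with its graph $\{(i,g(i)):i\in I\}$. For $1\le j\le nN$ let $Y_j(g)=1$ if $h(j)\in g$ and $Y_j(g)=0$ otherwise, and for $1\le m\le nN$ let $X_m(g)=\sum_{j=1}^mY_j(g)=|h(\{1,\dots,m\})\cap g|$. *)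

theory Defs
  imports "HOL-Library.FuncSet" Complex_Main
begin

definition Pr :: "(nat \<Rightarrow> nat) set \<Rightarrow> ((nat \<Rightarrow> nat) \<Rightarrow> bool) \<Rightarrow> real" where
  "Pr G E = real (card {g \<in> G. E g}) / real (card G)"

definition graph_on :: "nat \<Rightarrow> (nat \<Rightarrow> nat) \<Rightarrow> (nat \<times> nat) set" where
  "graph_on n g = {(i, g i) | i. i \<in> {1..n}}"

definition Xcnt :: "nat \<Rightarrow> (nat \<Rightarrow> nat \<times> nat) \<Rightarrow> nat \<Rightarrow> (nat \<Rightarrow> nat) \<Rightarrow> nat" where
  "Xcnt n h m g = card (h ` {1..m} \<inter> graph_on n g)"

end

theory Submission
  imports Defs "HOL-Analysis.Convex"
begin

text \<open>Second-moment method. For a set P of cells, X = |P \<inter> graph g| has mean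
  \<mu> = |P|/N, and the pair-correlation bound gives E[X^2] \<le> \<mu> + C \<mu>^2. The Paley-Zygmund
  inequality P(X > t) \<ge> (\<mu> - t)^2 / E[X^2] at t = 0 yields P(X \<ge> 1) \<ge> \<mu>/(1 + C \<mu>)
  \<ge> min(\<mu>/2, 1/(2C)), and at t = \<mu>/2 \<ge> k it yields P(X \<ge> k) \<ge> \<mu>/(4(1 + C \<mu>))
  \<ge> 1/(2 + 4C), since \<mu> \<ge> 2. Both bounds hold for every prefix h{1..m}, however h is
  ordered.\<close>

lemma Pr_le_1:
  assumes "finite G"
  shows "Pr G E \<le> 1"
proof -
  have "card {g \<in> G. E g} \<le> card G"
    using assms by (intro card_mono) auto
  then show ?thesis
    unfolding Pr_def by (cases "card G = 0") auto
qed

lemma Pr_mono: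
  assumes "finite G" and "\<And>g. g \<in> G \<Longrightarrow> E g \<Longrightarrow> F g"
  shows "Pr G E \<le> Pr G F"
proof -
  have "card {g \<in> G. E g} \<le> card {g \<in> G. F g}"
    using assms by (intro card_mono) auto
  then show ?thesis
    unfolding Pr_def by (simp add: divide_right_mono)
qed

lemma sum_of_bool_eq_Pr:
  assumes "finite G"
  shows "(\<Sum>g\<in>G. of_bool (E g)) = Pr G E * card G"
  using assms by (cases "G = {}") (simp_all add: Pr_def Int_def)

lemma paley_zygmund_card:
  fixes f :: "'a \<Rightarrow> real" and t :: real
  assumes fin: "finite G" and nonneg: "\<And>g. g \<in> G \<Longrightarrow> f g \<ge> 0" and "t \<ge> 0"
    and "t * card G \<le> sum f G"
  shows "(sum f G - t * card G)\<^sup>2 \<le> card {g \<in> G. f g > t} * (\<Sum>g\<in>G. (f g)\<^sup>2)"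
proof -
  let ?A = "{g \<in> G. f g > t}"
  have "sum f (G - ?A) \<le> (\<Sum>g\<in>G - ?A. t)"
    by (rule sum_mono) auto
  also have "\<dots> = t * card (G - ?A)"
    by simp
  also have "\<dots> \<le> t * card G"
    using \<open>t \<ge> 0\<close> fin by (intro mult_left_mono) (auto intro: card_mono)
  finally have "sum f G - t * card G \<le> sum f ?A"
    using sum.subset_diff[OF _ fin, of ?A f] by auto
  then have "(sum f G - t * card G)\<^sup>2 \<le> (sum f ?A)\<^sup>2"
    using assms(4) by (intro power_mono) auto
  also have "\<dots> \<le> (\<Sum>g\<in>?A. (f g)\<^sup>2) * card ?A"
    by (rule sum_squared_le_sum_of_squares)
  also have "\<dots> \<le> (\<Sum>g\<in>G. (f g)\<^sup>2) * card ?A"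
    using fin by (intro mult_right_mono sum_mono2) auto
  finally show ?thesis
    by (simp add: mult.commute)
qed

lemma second_moment_tail_bound:
  fixes f :: "(nat \<Rightarrow> nat) \<Rightarrow> real" and \<mu> \<sigma> t :: real
  assumes fin: "finite G" and ne: "G \<noteq> {}" and nonneg: "\<And>g. g \<in> G \<Longrightarrow> f g \<ge> 0"
    and first: "sum f G = \<mu> * card G" and second: "(\<Sum>g\<in>G. (f g)\<^sup>2) \<le> \<sigma> * card G"
    and "0 \<le> t" "t \<le> \<mu>" "\<sigma> > 0"
  shows "(\<mu> - t)\<^sup>2 / \<sigma> \<le> Pr G (\<lambda>g. t < f g)"
proof -
  define K where "K = real (card G)"
  define c where "c = real (card {g \<in> G. t < f g})"
  have "K > 0"
    using fin ne by (simp add: K_def card_gt_0_iff)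
  have "t * card G \<le> sum f G"
    using first \<open>t \<le> \<mu>\<close> by (simp add: mult_right_mono)
  from paley_zygmund_card[OF fin nonneg \<open>0 \<le> t\<close> this]
  have "(sum f G - t * card G)\<^sup>2 \<le> c * (\<Sum>g\<in>G. (f g)\<^sup>2)"
    by (simp add: c_def)
  then have "((\<mu> - t) * K)\<^sup>2 \<le> c * (\<Sum>g\<in>G. (f g)\<^sup>2)"
    by (simp add: first K_def left_diff_distrib)
  also have "\<dots> \<le> c * (\<sigma> * K)"
    using second by (simp add: c_def K_def mult_left_mono)
  finally have "(\<mu> - t)\<^sup>2 * K \<le> c * \<sigma>"
    using \<open>K > 0\<close> by (simp add: power2_eq_square)
  then show ?thesis
    using \<open>K > 0\<close> \<open>\<sigma> > 0\<close> by (simp add: Pr_def c_def K_def field_simps)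
qed

lemma min_half_le_sq_div:
  fixes \<mu> C :: real
  assumes "\<mu> > 0" and "C > 0"
  shows "min (\<mu> / 2) (1 / (2 * C)) \<le> \<mu>\<^sup>2 / (\<mu> + C * \<mu>\<^sup>2)"
proof -
  have "0 < 1 + C * \<mu>" "0 < \<mu> + C * \<mu>\<^sup>2"
    using assms by (simp_all add: add_pos_pos add_pos_nonneg)
  then have ratio: "\<mu>\<^sup>2 / (\<mu> + C * \<mu>\<^sup>2) = \<mu> / (1 + C * \<mu>)"
    using assms by (simp add: power2_eq_square field_simps)
  show ?thesis
  proof (cases "C * \<mu> \<le> 1")
    case True
    then have "\<mu> / 2 \<le> \<mu> / (1 + C * \<mu>)"
      using assms \<open>0 < 1 + C * \<mu>\<close> by (intro divide_left_mono) auto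
    then show ?thesis
      unfolding ratio by linarith
  next
    case False
    then have "1 / (2 * C) \<le> \<mu> / (1 + C * \<mu>)"
      using assms by (simp add: field_simps)
    then show ?thesis
      unfolding ratio by linarith
  qed
qed

lemma inverse_2_plus_4_le_half_sq_div:
  fixes \<mu> C :: real
  assumes "2 \<le> \<mu>" and "0 \<le> C"
  shows "1 / (2 + 4 * C) \<le> (\<mu> / 2)\<^sup>2 / (\<mu> + C * \<mu>\<^sup>2)"
proof -
  have "0 < 1 + C * \<mu>" "0 < \<mu> + C * \<mu>\<^sup>2"
    using assms by (simp_all add: add_pos_nonneg)
  then have "(\<mu> / 2)\<^sup>2 / (\<mu> + C * \<mu>\<^sup>2) = \<mu> / (4 * (1 + C * \<mu>))"
    using assms by (simp add: power2_eq_square field_simps)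
  moreover have "1 / (2 + 4 * C) \<le> \<mu> / (4 * (1 + C * \<mu>))"
    using assms by (simp add: field_simps add_pos_nonneg)
  ultimately show ?thesis
    by simp
qed

definition hits :: "(nat \<times> nat) set \<Rightarrow> (nat \<Rightarrow> nat) \<Rightarrow> (nat \<times> nat) set" where
  "hits P g = {p \<in> P. g (fst p) = snd p}"

lemma card_hits_eq_sum:
  assumes "finite P"
  shows "real (card (hits P g)) = (\<Sum>p\<in>P. of_bool (g (fst p) = snd p))"
  using assms by (simp add: hits_def Int_def)

locale pairwise_bounded_maps =
  fixes n N :: nat and G :: "(nat \<Rightarrow> nat) set" and C :: real
  assumes finite_G: "finite G" and G_nonempty: "G \<noteq> {}" and N_pos: "N > 0" and C_pos: "C > 0"
    and marginal: "\<And>i j. i \<in> {1..n} \<Longrightarrow> j \<in> {1..N} \<Longrightarrow> Pr G (\<lambda>g. g i = j) = 1 / real N"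
    and pair_le: "\<And>i1 j1 i2 j2. i1 \<in> {1..n} \<Longrightarrow> j1 \<in> {1..N} \<Longrightarrow> i2 \<in> {1..n} \<Longrightarrow> j2 \<in> {1..N}
       \<Longrightarrow> (i1, j1) \<noteq> (i2, j2) \<Longrightarrow> Pr G (\<lambda>g. g i1 = j1 \<and> g i2 = j2) \<le> C / real N ^ 2"
begin

lemma sum_hit:
  assumes "p \<in> {1..n} \<times> {1..N}"
  shows "(\<Sum>g\<in>G. of_bool (g (fst p) = snd p)) = card G / N"
  using assms marginal[of "fst p" "snd p"] by (auto simp: sum_of_bool_eq_Pr[OF finite_G])

lemma sum_hit_pair_le:
  assumes "p \<in> {1..n} \<times> {1..N}" and "q \<in> {1..n} \<times> {1..N}"
  shows "(\<Sum>g\<in>G. of_bool (g (fst p) = snd p) * of_bool (g (fst q) = snd q))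
           \<le> (if p = q then card G / N else 0) + C * card G / N\<^sup>2"
proof (cases "p = q")
  case True
  have "0 \<le> C * card G / N\<^sup>2"
    using C_pos by simp
  then show ?thesis
    using True sum_hit[OF assms(1)] by (simp flip: of_bool_conj)
next
  case False
  have "(\<Sum>g\<in>G. of_bool (g (fst p) = snd p) * of_bool (g (fst q) = snd q))
      = Pr G (\<lambda>g. g (fst p) = snd p \<and> g (fst q) = snd q) * card G"
    by (simp add: of_bool_conj flip: sum_of_bool_eq_Pr[OF finite_G])
  also have "\<dots> \<le> C / N\<^sup>2 * card G"
    using assms False pair_le[of "fst p" "snd p" "fst q" "snd q"]
    by (intro mult_right_mono) (auto simp: prod_eq_iff)
  finally show ?thesis
    using False by simp
qed

lemma sum_card_hits:
  assumes "P \<subseteq> {1..n} \<times> {1..N}"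
  shows "(\<Sum>g\<in>G. real (card (hits P g))) = card P / N * card G"
proof -
  have "finite P"
    using assms finite_subset by blast
  then have "(\<Sum>g\<in>G. real (card (hits P g))) = (\<Sum>p\<in>P. \<Sum>g\<in>G. of_bool (g (fst p) = snd p))"
    by (simp add: card_hits_eq_sum sum.swap[of _ G])
  also have "\<dots> = (\<Sum>p\<in>P. card G / N)"
    using assms sum_hit by (intro sum.cong) auto
  finally show ?thesis
    by simp
qed

lemma sum_card_hits_squared_le:
  assumes "P \<subseteq> {1..n} \<times> {1..N}"
  shows "(\<Sum>g\<in>G. (real (card (hits P g)))\<^sup>2) \<le> (card P / N + C * (card P / N)\<^sup>2) * card G"
proof -
  have "finite P"
    using assms finite_subset by blast
  let ?hit = "\<lambda>p g. of_bool (g (fst p) = snd p) :: real"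
  have "(\<Sum>g\<in>G. (real (card (hits P g)))\<^sup>2) = (\<Sum>p\<in>P. \<Sum>q\<in>P. \<Sum>g\<in>G. ?hit p g * ?hit q g)"
    by (simp add: card_hits_eq_sum[OF \<open>finite P\<close>] power2_eq_square sum_product
        sum.swap[of _ G] sum.swap[of _ G P])
  also have "\<dots> \<le> (\<Sum>p\<in>P. \<Sum>q\<in>P. (if p = q then card G / N else 0) + C * card G / N\<^sup>2)"
    using assms by (intro sum_mono sum_hit_pair_le) auto
  also have "\<dots> = (card P / N + C * (card P / N)\<^sup>2) * card G"
    using \<open>finite P\<close> by (simp add: sum.distrib field_simps power2_eq_square)
  finally show ?thesis .
qed

lemma Pr_card_hits_gt_ge:
  assumes P: "P \<subseteq> {1..n} \<times> {1..N}" and "P \<noteq> {}" and "0 \<le> t" and "t \<le> card P / N"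
  defines "\<mu> \<equiv> card P / N"
  shows "(\<mu> - t)\<^sup>2 / (\<mu> + C * \<mu>\<^sup>2) \<le> Pr G (\<lambda>g. t < real (card (hits P g)))"
proof (rule second_moment_tail_bound[OF finite_G G_nonempty])
  have "finite P"
    using P finite_subset by blast
  then have "\<mu> > 0"
    using \<open>P \<noteq> {}\<close> N_pos by (simp add: \<mu>_def card_gt_0_iff)
  then show "\<mu> + C * \<mu>\<^sup>2 > 0"
    using C_pos by (simp add: add_pos_nonneg)
  show "(\<Sum>g\<in>G. real (card (hits P g))) = \<mu> * card G"
    using sum_card_hits[OF P] by (simp add: \<mu>_def)
  show "(\<Sum>g\<in>G. (real (card (hits P g)))\<^sup>2) \<le> (\<mu> + C * \<mu>\<^sup>2) * card G"
    using sum_card_hits_squared_le[OF P] by (simp add: \<mu>_def)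
qed (use assms in auto)

lemma Pr_card_hits_ge_1:
  assumes P: "P \<subseteq> {1..n} \<times> {1..N}" and "P \<noteq> {}"
  shows "min (card P / (2 * N)) (1 / (2 * C)) \<le> Pr G (\<lambda>g. 1 \<le> card (hits P g))"
proof -
  define \<mu> where "\<mu> = card P / N"
  have "finite P"
    using P finite_subset by blast
  then have "\<mu> > 0"
    using \<open>P \<noteq> {}\<close> N_pos by (simp add: \<mu>_def card_gt_0_iff)
  have "min (card P / (2 * N)) (1 / (2 * C)) \<le> (\<mu> - 0)\<^sup>2 / (\<mu> + C * \<mu>\<^sup>2)"
    using min_half_le_sq_div[OF \<open>\<mu> > 0\<close> C_pos] by (simp add: \<mu>_def)
  also have "\<dots> \<le> Pr G (\<lambda>g. 0 < real (card (hits P g)))"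
    unfolding \<mu>_def using P \<open>P \<noteq> {}\<close> by (rule Pr_card_hits_gt_ge) simp_all
  finally show ?thesis
    by (simp add: Suc_le_eq)
qed

lemma Pr_card_hits_ge:
  assumes P: "P \<subseteq> {1..n} \<times> {1..N}" and k: "2 * k * N \<le> card P"
  shows "1 / (2 + 4 * C) \<le> Pr G (\<lambda>g. k \<le> card (hits P g))"
proof (cases "k = 0")
  case True
  then show ?thesis
    using C_pos G_nonempty finite_G by (simp add: Pr_def card_gt_0_iff)
next
  case False
  define \<mu> where "\<mu> = card P / N"
  have "2 * k \<le> \<mu>"
    using k N_pos by (simp add: \<mu>_def field_simps flip: of_nat_mult of_nat_le_iff)
  then have "2 \<le> \<mu>"
    using False by linarith
  then have "P \<noteq> {}"
    by (auto simp: \<mu>_def)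
  have "1 / (2 + 4 * C) \<le> (\<mu> - \<mu> / 2)\<^sup>2 / (\<mu> + C * \<mu>\<^sup>2)"
    using inverse_2_plus_4_le_half_sq_div[OF \<open>2 \<le> \<mu>\<close>] C_pos by simp
  also have "\<dots> \<le> Pr G (\<lambda>g. \<mu> / 2 < real (card (hits P g)))"
    unfolding \<mu>_def using P \<open>P \<noteq> {}\<close> \<open>2 \<le> \<mu>\<close> by (intro Pr_card_hits_gt_ge) (simp_all add: \<mu>_def)
  also have "\<dots> \<le> Pr G (\<lambda>g. k \<le> card (hits P g))"
    using \<open>2 * k \<le> \<mu>\<close> by (intro Pr_mono[OF finite_G]) simp
  finally show ?thesis .
qed

end

lemma bij_betw_prefix:
  assumes "bij_betw h {1..M} S" and "m \<le> M"
  shows "h ` {1..m} \<subseteq> S" and "card (h ` {1..m}) = m"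
proof -
  have "{1..m} \<subseteq> {1..M}"
    using assms(2) by auto
  then show "h ` {1..m} \<subseteq> S" and "card (h ` {1..m}) = m"
    using assms(1) inj_on_subset[of h "{1..M}" "{1..m}"]
    by (auto simp: bij_betw_def card_image)
qed

lemma Xcnt_eq_card_hits:
  assumes "h ` {1..m} \<subseteq> {1..n} \<times> UNIV"
  shows "Xcnt n h m g = card (hits (h ` {1..m}) g)"
proof -
  have "h ` {1..m} \<inter> graph_on n g = hits (h ` {1..m}) g"
    using assms unfolding graph_on_def hits_def by force
  then show ?thesis
    by (simp add: Xcnt_def)
qed

theorem lemma3p3:
  fixes n N ell :: nat and G :: "(nat \<Rightarrow> nat) set" and C :: real
    and a :: "nat \<Rightarrow> nat \<Rightarrow> real" and h :: "nat \<Rightarrow> nat \<times> nat"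
  assumes "n \<ge> 1" and "N \<ge> 1"
    and G_sub: "G \<subseteq> {1..n} \<rightarrow>\<^sub>E {1..N}"
    and G_fin: "finite G" and G_ne: "G \<noteq> {}"
    and C_ge: "C \<ge> 1"
    and marg: "\<And>i j. i \<in> {1..n} \<Longrightarrow> j \<in> {1..N} \<Longrightarrow> Pr G (\<lambda>g. g i = j) = 1 / real N"
    and pair: "\<And>i1 j1 i2 j2. i1 \<in> {1..n} \<Longrightarrow> j1 \<in> {1..N} \<Longrightarrow> i2 \<in> {1..n} \<Longrightarrow> j2 \<in> {1..N}
       \<Longrightarrow> (i1, j1) \<noteq> (i2, j2) \<Longrightarrow> Pr G (\<lambda>g. g i1 = j1 \<and> g i2 = j2) \<le> C / real N ^ 2"
    and l: "1 \<le> ell" "ell \<le> n"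
    and a_nonneg: "\<And>i j. i \<in> {1..n} \<Longrightarrow> j \<in> {1..N} \<Longrightarrow> a i j \<ge> 0"
    and h_bij: "bij_betw h {1..n * N} ({1..n} \<times> {1..N})"
    and h_mono: "\<And>j. 1 \<le> j \<Longrightarrow> j < ell * N \<Longrightarrow> case_prod a (h j) \<ge> case_prod a (h (j + 1))"
    and h_zero: "\<And>j. ell * N < j \<Longrightarrow> j \<le> n * N \<Longrightarrow> case_prod a (h j) = 0"
  shows "(\<forall>m. 1 \<le> m \<and> m \<le> n * N \<longrightarrow>
            Pr G (\<lambda>g. Xcnt n h m g \<ge> 1)
              \<ge> min (real m / (2 * real N)) (1 / (2 * C)) * Pr G (\<lambda>g. Xcnt n h (ell * N) g \<ge> 1))
       \<and> (\<forall>k m. 2 * k * N \<le> m \<and> m \<le> n * N \<longrightarrow>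
            Pr G (\<lambda>g. Xcnt n h m g \<ge> k) \<ge> Pr G (\<lambda>g. Xcnt n h (ell * N) g \<ge> k) / (2 + 4 * C))"
proof -
  interpret pairwise_bounded_maps n N G C
    using G_fin G_ne \<open>N \<ge> 1\<close> C_ge marg pair by unfold_locales auto
  have prefix: "h ` {1..m} \<subseteq> {1..n} \<times> {1..N}" "card (h ` {1..m}) = m"
    if "m \<le> n * N" for m
    using bij_betw_prefix[OF h_bij that] by auto
  have X: "Xcnt n h m = (\<lambda>g. card (hits (h ` {1..m}) g))" if "m \<le> n * N" for m
    using prefix(1)[OF that] by (intro ext Xcnt_eq_card_hits) auto
  show ?thesis
  proof (intro conjI allI impI)
    fix m assume m: "1 \<le> m \<and> m \<le> n * N"
    have "h ` {1..m} \<noteq> {}"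
      using m by auto
    have "min (real m / (2 * real N)) (1 / (2 * C)) * Pr G (\<lambda>g. 1 \<le> Xcnt n h (ell * N) g)
        \<le> min (real m / (2 * real N)) (1 / (2 * C))"
      using C_ge by (intro mult_left_le Pr_le_1[OF G_fin]) auto
    also have "\<dots> \<le> Pr G (\<lambda>g. 1 \<le> card (hits (h ` {1..m}) g))"
      using Pr_card_hits_ge_1[OF prefix(1) \<open>h ` {1..m} \<noteq> {}\<close>] prefix(2) m by simp
    finally show "min (real m / (2 * real N)) (1 / (2 * C)) * Pr G (\<lambda>g. 1 \<le> Xcnt n h (ell * N) g)
        \<le> Pr G (\<lambda>g. 1 \<le> Xcnt n h m g)"
      using X m by simp
  next
    fix k m assume km: "2 * k * N \<le> m \<and> m \<le> n * N"
    have "Pr G (\<lambda>g. k \<le> Xcnt n h (ell * N) g) / (2 + 4 * C) \<le> 1 / (2 + 4 * C)"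
      using C_ge by (intro divide_right_mono Pr_le_1[OF G_fin]) auto
    also have "\<dots> \<le> Pr G (\<lambda>g. k \<le> card (hits (h ` {1..m}) g))"
      using Pr_card_hits_ge[OF prefix(1)] prefix(2) km by simp
    finally show "Pr G (\<lambda>g. k \<le> Xcnt n h (ell * N) g) / (2 + 4 * C) \<le> Pr G (\<lambda>g. k \<le> Xcnt n h m g)"
      using X km by simp
  qed
qed

end
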